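(* Let $d=\infty$, $C>0$, and let ${\boldsymbol\gamma}$ be finite-order weights (of some order $\omega\in\mathbb N$) with ${\boldsymbol\gamma}\in\mathcal S_{\infty,C}$. Then $$\mathrm{decay}(T^\uparrow_{\infty,C}{\boldsymbol\gamma})=\mathrm{decay}({\boldsymbol\gamma})\ge1.$$
   Context: $\mathcal U_\infty$ is the set of finite subsets of $\mathbb N$; weights are families $(\gamma_u)_{u\in\mathcal U_\infty}$ of non-negative reals. Finite-order weights of order $\omega\in\mathbb N$: $\gamma_u=0$ whenever $|u|>\omega$. For a family $(a_v)_{v\in V}$ of non-negative reals over a countably infinite index set, $\mathrm{decay}((a_v))=\sup\{\tau>0:\sum_va_v^{1/\tau}<\infty\}$, $\sup\emptyset=0$. For $C>0$: $\mathcal S_{\infty,C}=\{{\boldsymbol\gamma}:\sum_vC^{2|v|}\gamma_v<\infty\}$ and $(T^\uparrow_{\infty,C}{\boldsymbol\gamma})_u=\sum_{v\supseteq u}C^{2|v|}\gamma_v$. *)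

theory Defs
  imports "HOL-Analysis.Analysis"
begin

definition U_inf :: "nat set set" where
  "U_inf = {u. finite u}"

definition decay :: "('a \<Rightarrow> real) \<Rightarrow> 'a set \<Rightarrow> ereal" where
  "decay a V =
     (let S = {\<tau>::real. \<tau> > 0 \<and> (\<lambda>v. a v powr (1 / \<tau>)) summable_on V}
      in if S = {} then 0 else Sup (ereal ` S))"

definition finite_order_weights :: "(nat set \<Rightarrow> real) \<Rightarrow> nat \<Rightarrow> bool" where
  "finite_order_weights \<gamma> \<omega> \<longleftrightarrow>
     (\<forall>u\<in>U_inf. \<gamma> u \<ge> 0) \<and> (\<forall>u\<in>U_inf. card u > \<omega> \<longrightarrow> \<gamma> u = 0)"

definition S_inf :: "real \<Rightarrow> (nat set \<Rightarrow> real) set" where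
  "S_inf C = {\<gamma>. (\<lambda>v. C ^ (2 * card v) * \<gamma> v) summable_on U_inf}"

definition T_up_inf :: "real \<Rightarrow> (nat set \<Rightarrow> real) \<Rightarrow> (nat set \<Rightarrow> real)" where
  "T_up_inf C \<gamma> = (\<lambda>u. \<Sum>\<^sub>\<infinity>v\<in>{v\<in>U_inf. u \<subseteq> v}. C ^ (2 * card v) * \<gamma> v)"

end

theory Submission
  imports Defs
begin

(* For weights of order \<omega> the factor C^(2|v|) is bounded above and below on the support of
   \<gamma>, so \<gamma> and c v = C^(2|v|) \<gamma> v are comparable, and T\<gamma> u \<ge> c u: summability of (T\<gamma>)^p
   forces that of \<gamma>^p. Conversely, for 0 < p \<le> 1 the subadditivity (\<Sum> c v)^p \<le> \<Sum> c v^p,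
   together with the fact that each v of size at most \<omega> contains at most 2^\<omega> sets u, gives
   \<Sum>u (T\<gamma> u)^p \<le> 2^\<omega> \<Sum>v c v^p. Exponents p \<ge> 1 cost nothing since \<gamma> and T\<gamma> are
   summable; summability of \<gamma> is also what gives decay \<ge> 1. *)

lemma powr_le_powr_minus_one_mult:
  fixes x S q :: real
  assumes "0 \<le> x" "x \<le> S" "1 \<le> q"
  shows "x powr q \<le> S powr (q - 1) * x"
proof (cases "x = 0")
  case False
  then have "x powr q = x powr (q - 1) * x"
    using assms(1) by (simp add: powr_diff)
  also have "\<dots> \<le> S powr (q - 1) * x"
    using assms by (intro mult_right_mono powr_mono2) auto
  finally show ?thesis .
qed simp

lemma has_sum_sum_functions:
  fixes f :: "'i \<Rightarrow> 'a \<Rightarrow> 'b::topological_comm_monoid_add"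
  assumes "finite I" "\<And>i. i \<in> I \<Longrightarrow> (f i has_sum s i) A"
  shows "((\<lambda>x. \<Sum>i\<in>I. f i x) has_sum (\<Sum>i\<in>I. s i)) A"
  using assms by (induction I rule: finite_induct) (auto intro: has_sum_add)

lemma summable_on_powr_ge_one:
  fixes a :: "'a \<Rightarrow> real"
  assumes "a summable_on V" "\<And>v. v \<in> V \<Longrightarrow> 0 \<le> a v" "1 \<le> p"
  shows "(\<lambda>v. a v powr p) summable_on V"
proof (rule summable_on_comparison_test)
  show "(\<lambda>v. infsum a V powr (p - 1) * a v) summable_on V"
    using assms(1) by (rule summable_on_cmult_right)
  show "a v powr p \<le> infsum a V powr (p - 1) * a v" if "v \<in> V" for v
    using that assms
    by (intro powr_le_powr_minus_one_mult finite_sum_le_infsum[where B = "{v}", simplified]) auto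
qed simp

lemma summable_on_powr_comparison:
  fixes f g :: "'a \<Rightarrow> real"
  assumes "(\<lambda>x. g x powr p) summable_on A" "0 \<le> p" "0 \<le> k"
    and "\<And>x. x \<in> A \<Longrightarrow> 0 \<le> f x" "\<And>x. x \<in> A \<Longrightarrow> 0 \<le> g x"
    and "\<And>x. x \<in> A \<Longrightarrow> f x \<le> k * g x"
  shows "(\<lambda>x. f x powr p) summable_on A"
proof (rule summable_on_comparison_test)
  show "(\<lambda>x. k powr p * g x powr p) summable_on A"
    using assms(1) by (rule summable_on_cmult_right)
  show "f x powr p \<le> k powr p * g x powr p" if "x \<in> A" for x
    using that assms by (auto intro: powr_mono2 simp flip: powr_mult)
qed simp

lemma infsum_powr_le_infsum_powr:
  fixes f :: "'a \<Rightarrow> real"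
  assumes "(\<lambda>x. f x powr p) summable_on A" "\<And>x. x \<in> A \<Longrightarrow> 0 \<le> f x" "0 < p" "p \<le> 1"
  shows "infsum f A powr p \<le> infsum (\<lambda>x. f x powr p) A"
proof -
  define B where "B = infsum (\<lambda>x. f x powr p) A"
  have B_nonneg: "0 \<le> B"
    unfolding B_def by (rule infsum_nonneg) simp
  have f_eq: "f x = (f x powr p) powr (1 / p)" if "x \<in> A" for x
    using that assms by (simp add: powr_powr)
  have f_summable: "f summable_on A"
    using summable_on_powr_ge_one[OF assms(1), of "1 / p"] assms f_eq
    by (simp cong: summable_on_cong)
  have "infsum f A \<le> infsum (\<lambda>x. B powr (1 / p - 1) * f x powr p) A"
  proof (rule infsum_mono[OF f_summable summable_on_cmult_right[OF assms(1)]])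
    fix x assume "x \<in> A"
    then have "f x powr p \<le> B"
      using assms unfolding B_def by (intro finite_sum_le_infsum[where B = "{x}", simplified]) auto
    then have "(f x powr p) powr (1 / p) \<le> B powr (1 / p - 1) * f x powr p"
      using assms by (intro powr_le_powr_minus_one_mult) auto
    then show "f x \<le> B powr (1 / p - 1) * f x powr p"
      using f_eq \<open>x \<in> A\<close> by simp
  qed
  also have "\<dots> = B powr (1 / p - 1) * B"
    unfolding B_def by (rule infsum_cmult_right')
  also have "\<dots> = B powr (1 / p)"
    using B_nonneg by (cases "B = 0") (simp_all add: powr_diff)
  finally have "infsum f A powr p \<le> (B powr (1 / p)) powr p"
    using assms infsum_nonneg[of A f] by (intro powr_mono2) auto
  also have "\<dots> = B"
    using B_nonneg assms by (simp add: powr_powr)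
  finally show ?thesis
    unfolding B_def .
qed

lemma card_Int_Pow_le_power:
  assumes "finite v" "card v \<le> n"
  shows "card (F \<inter> Pow v) \<le> 2 ^ n"
proof -
  have "card (F \<inter> Pow v) \<le> card (Pow v)"
    using assms by (intro card_mono) auto
  also have "\<dots> \<le> 2 ^ n"
    using assms by (simp add: card_Pow power_increasing)
  finally show ?thesis .
qed

lemma summable_on_upward_sums:
  fixes b :: "'a set \<Rightarrow> real"
  assumes "b summable_on V" "\<And>v. v \<in> V \<Longrightarrow> 0 \<le> b v" "\<And>v. v \<in> V \<Longrightarrow> finite v"
    and "\<And>v. v \<in> V \<Longrightarrow> n < card v \<Longrightarrow> b v = 0"
  shows "(\<lambda>u. infsum b {v\<in>V. u \<subseteq> v}) summable_on V"
proof (rule nonneg_bdd_above_summable_on)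
  show "0 \<le> infsum b {v\<in>V. u \<subseteq> v}" for u
    using assms(2) by (intro infsum_nonneg) auto
  have "(\<Sum>u\<in>F. infsum b {v\<in>V. u \<subseteq> v}) \<le> 2 ^ n * infsum b V" if "finite F" for F
  proof (rule has_sum_mono)
    have upward: "((\<lambda>v. if u \<subseteq> v then b v else 0) has_sum infsum b {v\<in>V. u \<subseteq> v}) V" for u
      using summable_on_subset_banach[OF assms(1), of "{v\<in>V. u \<subseteq> v}"]
      by (subst has_sum_cong_neutral[where T = "{v\<in>V. u \<subseteq> v}"]) auto
    show "((\<lambda>v. \<Sum>u\<in>F. if u \<subseteq> v then b v else 0) has_sum
        (\<Sum>u\<in>F. infsum b {v\<in>V. u \<subseteq> v})) V"
      using \<open>finite F\<close> upward
      by (rule has_sum_sum_functions[where f = "\<lambda>u v. if u \<subseteq> v then b v else 0"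
            and s = "\<lambda>u. infsum b {v\<in>V. u \<subseteq> v}"])
    show "((\<lambda>v. 2 ^ n * b v) has_sum (2 ^ n * infsum b V)) V"
      using assms(1) by (intro has_sum_cmult_right has_sum_infsum)
    show "(\<Sum>u\<in>F. if u \<subseteq> v then b v else 0) \<le> 2 ^ n * b v" if "v \<in> V" for v
    proof -
      have "(\<Sum>u\<in>F. if u \<subseteq> v then b v else 0) = real (card (F \<inter> Pow v)) * b v"
        using \<open>finite F\<close> by (simp add: sum.If_cases Pow_def Int_def)
      also have "\<dots> \<le> 2 ^ n * b v"
      proof (cases "n < card v")
        case False
        then have "real (card (F \<inter> Pow v)) \<le> 2 ^ n"
          using card_Int_Pow_le_power[OF assms(3)[OF that], of n F] by (simp flip: of_nat_le_iff)
        then show ?thesis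
          using assms(2)[OF that] by (rule mult_right_mono)
      qed (simp add: assms(4)[OF that])
      finally show ?thesis .
    qed
  qed
  then show "bdd_above (sum (\<lambda>u. infsum b {v\<in>V. u \<subseteq> v}) ` {F. F \<subseteq> V \<and> finite F})"
    by (intro bdd_aboveI2) auto
qed

lemma summable_on_powr_upward_sums:
  fixes c :: "'a set \<Rightarrow> real"
  assumes "(\<lambda>v. c v powr p) summable_on V" "\<And>v. v \<in> V \<Longrightarrow> 0 \<le> c v"
    and "\<And>v. v \<in> V \<Longrightarrow> finite v" "\<And>v. v \<in> V \<Longrightarrow> n < card v \<Longrightarrow> c v = 0"
    and "0 < p" "p \<le> 1"
  shows "(\<lambda>u. infsum c {v\<in>V. u \<subseteq> v} powr p) summable_on V"
proof (rule summable_on_comparison_test)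
  show "(\<lambda>u. infsum (\<lambda>v. c v powr p) {v\<in>V. u \<subseteq> v}) summable_on V"
    using assms by (intro summable_on_upward_sums[OF assms(1)]) auto
  show "infsum c {v\<in>V. u \<subseteq> v} powr p \<le> infsum (\<lambda>v. c v powr p) {v\<in>V. u \<subseteq> v}" for u
    by (rule infsum_powr_le_infsum_powr[OF summable_on_subset_banach[OF assms(1)]])
      (use assms in auto)
qed simp

lemma power_mult_le_max_one_power:
  fixes C x :: real
  assumes "0 \<le> C" "0 \<le> x" "m < n \<Longrightarrow> x = 0"
  shows "C ^ n * x \<le> max 1 C ^ m * x"
proof (cases "m < n")
  case False
  have "C ^ n \<le> max 1 C ^ n"
    using assms(1) by (intro power_mono) auto
  also have "\<dots> \<le> max 1 C ^ m"
    using False by (intro power_increasing) auto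
  finally show ?thesis
    using assms(2) by (rule mult_right_mono)
qed (simp add: assms(3))

lemma decay_cong:
  assumes "\<And>\<tau>. 0 < \<tau> \<Longrightarrow>
    (\<lambda>v. a v powr (1 / \<tau>)) summable_on V \<longleftrightarrow> (\<lambda>v. b v powr (1 / \<tau>)) summable_on V"
  shows "decay a V = decay b V"
proof -
  have "{\<tau>. 0 < \<tau> \<and> (\<lambda>v. a v powr (1 / \<tau>)) summable_on V}
      = {\<tau>. 0 < \<tau> \<and> (\<lambda>v. b v powr (1 / \<tau>)) summable_on V}"
    using assms by blast
  then show ?thesis
    unfolding decay_def by simp
qed

lemma one_le_decay:
  assumes "a summable_on V" "\<And>v. v \<in> V \<Longrightarrow> 0 \<le> a v"
  shows "1 \<le> decay a V"
proof -
  define S where "S = {\<tau>::real. 0 < \<tau> \<and> (\<lambda>v. a v powr (1 / \<tau>)) summable_on V}"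
  have "1 \<in> S"
    using assms unfolding S_def by (simp cong: summable_on_cong)
  then have "ereal 1 \<le> Sup (ereal ` S)"
    by (intro Sup_upper) auto
  with \<open>1 \<in> S\<close> show ?thesis
    unfolding decay_def S_def[symmetric] by (auto simp: one_ereal_def)
qed

lemma finite_order_weights_nonneg:
  "finite_order_weights \<gamma> \<omega> \<Longrightarrow> v \<in> U_inf \<Longrightarrow> 0 \<le> \<gamma> v"
  by (simp add: finite_order_weights_def)

lemma finite_order_weights_vanish:
  "finite_order_weights \<gamma> \<omega> \<Longrightarrow> v \<in> U_inf \<Longrightarrow> \<omega> < card v \<Longrightarrow> \<gamma> v = 0"
  by (simp add: finite_order_weights_def)

lemma finite_order_weights_scaled_le:
  assumes "0 < C" "finite_order_weights \<gamma> \<omega>" "v \<in> U_inf"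
  shows "C ^ (2 * card v) * \<gamma> v \<le> max 1 C ^ (2 * \<omega>) * \<gamma> v"
  using assms finite_order_weights_nonneg finite_order_weights_vanish
  by (intro power_mult_le_max_one_power) auto

lemma finite_order_weights_le_scaled:
  assumes "0 < C" "finite_order_weights \<gamma> \<omega>" "v \<in> U_inf"
  shows "\<gamma> v \<le> max 1 (1 / C) ^ (2 * \<omega>) * (C ^ (2 * card v) * \<gamma> v)"
proof -
  have "\<gamma> v = (1 / C) ^ (2 * card v) * (C ^ (2 * card v) * \<gamma> v)"
    using assms(1) by (simp add: power_one_over)
  also have "\<dots> \<le> max 1 (1 / C) ^ (2 * \<omega>) * (C ^ (2 * card v) * \<gamma> v)"
    using assms finite_order_weights_nonneg finite_order_weights_vanish
    by (intro power_mult_le_max_one_power) auto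
  finally show ?thesis .
qed

lemma summable_on_U_inf_if_S_inf:
  assumes "0 < C" "finite_order_weights \<gamma> \<omega>" "\<gamma> \<in> S_inf C"
  shows "\<gamma> summable_on U_inf"
proof (rule summable_on_comparison_test)
  show "(\<lambda>v. max 1 (1 / C) ^ (2 * \<omega>) * (C ^ (2 * card v) * \<gamma> v)) summable_on U_inf"
    using assms(3) unfolding S_inf_def mem_Collect_eq by (rule summable_on_cmult_right)
qed (use assms finite_order_weights_le_scaled finite_order_weights_nonneg in blast)+

lemma T_up_inf_nonneg:
  assumes "0 < C" "finite_order_weights \<gamma> \<omega>"
  shows "0 \<le> T_up_inf C \<gamma> u"
  unfolding T_up_inf_def using assms finite_order_weights_nonneg
  by (intro infsum_nonneg) auto

lemma T_up_inf_ge_scaled: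
  assumes "0 < C" "finite_order_weights \<gamma> \<omega>" "\<gamma> \<in> S_inf C" "u \<in> U_inf"
  shows "C ^ (2 * card u) * \<gamma> u \<le> T_up_inf C \<gamma> u"
proof -
  have "(\<lambda>v. C ^ (2 * card v) * \<gamma> v) summable_on {v\<in>U_inf. u \<subseteq> v}"
    using assms(3) unfolding S_inf_def mem_Collect_eq by (rule summable_on_subset_banach) auto
  then show ?thesis
    unfolding T_up_inf_def using assms(1,4) finite_order_weights_nonneg[OF assms(2)]
    by (intro finite_sum_le_infsum[where B = "{u}", simplified]) auto
qed

lemma summable_on_T_up_inf:
  assumes "0 < C" "finite_order_weights \<gamma> \<omega>" "\<gamma> \<in> S_inf C"
  shows "T_up_inf C \<gamma> summable_on U_inf"
  unfolding T_up_inf_def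
proof (rule summable_on_upward_sums[where n = \<omega>])
  show "(\<lambda>v. C ^ (2 * card v) * \<gamma> v) summable_on U_inf"
    using assms(3) by (simp add: S_inf_def)
qed (use assms finite_order_weights_nonneg finite_order_weights_vanish in \<open>auto simp: U_inf_def\<close>)

lemma summable_on_powr_T_up_inf:
  assumes "0 < C" "finite_order_weights \<gamma> \<omega>" "0 < p" "p \<le> 1"
    and "(\<lambda>u. \<gamma> u powr p) summable_on U_inf"
  shows "(\<lambda>u. T_up_inf C \<gamma> u powr p) summable_on U_inf"
  unfolding T_up_inf_def
proof (rule summable_on_powr_upward_sums[where n = \<omega>])
  show "(\<lambda>v. (C ^ (2 * card v) * \<gamma> v) powr p) summable_on U_inf"
    by (rule summable_on_powr_comparison[OF assms(5), where k = "max 1 C ^ (2 * \<omega>)"])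
      (use assms finite_order_weights_nonneg finite_order_weights_scaled_le in auto)
qed (use assms finite_order_weights_nonneg finite_order_weights_vanish in \<open>auto simp: U_inf_def\<close>)

lemma summable_on_powr_if_powr_T_up_inf:
  assumes "0 < C" "finite_order_weights \<gamma> \<omega>" "\<gamma> \<in> S_inf C" "0 < p"
    and "(\<lambda>u. T_up_inf C \<gamma> u powr p) summable_on U_inf"
  shows "(\<lambda>u. \<gamma> u powr p) summable_on U_inf"
proof (rule summable_on_powr_comparison[OF assms(5)])
  show "\<gamma> u \<le> max 1 (1 / C) ^ (2 * \<omega>) * T_up_inf C \<gamma> u" if "u \<in> U_inf" for u
    by (rule order.trans[OF finite_order_weights_le_scaled[OF assms(1,2) that]
          mult_left_mono[OF T_up_inf_ge_scaled[OF assms(1-3) that]]]) simp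
qed (use assms finite_order_weights_nonneg T_up_inf_nonneg in auto)

lemma T_up_inf_powr_summable_iff:
  assumes "0 < C" "finite_order_weights \<gamma> \<omega>" "\<gamma> \<in> S_inf C" "0 < p"
  shows "(\<lambda>u. T_up_inf C \<gamma> u powr p) summable_on U_inf \<longleftrightarrow> (\<lambda>u. \<gamma> u powr p) summable_on U_inf"
proof (cases "p \<le> 1")
  case True
  then show ?thesis
    using summable_on_powr_T_up_inf[OF assms(1,2,4) True] summable_on_powr_if_powr_T_up_inf[OF assms]
    by blast
next
  case False
  have "(\<lambda>u. T_up_inf C \<gamma> u powr p) summable_on U_inf"
    using False assms T_up_inf_nonneg
    by (intro summable_on_powr_ge_one[OF summable_on_T_up_inf]) auto
  moreover have "(\<lambda>u. \<gamma> u powr p) summable_on U_inf"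
    using False assms finite_order_weights_nonneg
    by (intro summable_on_powr_ge_one[OF summable_on_U_inf_if_S_inf]) auto
  ultimately show ?thesis
    by blast
qed

theorem mainTheorem12:
  fixes C :: real and \<gamma> :: "nat set \<Rightarrow> real" and \<omega> :: nat
  assumes "C > 0"
    and "finite_order_weights \<gamma> \<omega>"
    and "\<gamma> \<in> S_inf C"
  shows "decay (T_up_inf C \<gamma>) U_inf = decay \<gamma> U_inf \<and> decay \<gamma> U_inf \<ge> 1"
proof
  show "decay (T_up_inf C \<gamma>) U_inf = decay \<gamma> U_inf"
    using T_up_inf_powr_summable_iff[OF assms] by (intro decay_cong) simp
  show "decay \<gamma> U_inf \<ge> 1"
    using summable_on_U_inf_if_S_inf[OF assms] finite_order_weights_nonneg[OF assms(2)]
    by (rule one_le_decay)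
qed

end
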